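(* Let $\mathcal{A}$ be a unital $C^*$-algebra and $x_1,\ldots,x_k\in\mathcal{A}$. If $C^*_1(x_1,\ldots,x_k)$ is $n$-homogeneous for some $n>1$, then $C^*_1(x_1,\ldots,x_k)=C^*(x_1,\ldots,x_k)$.
   Context: $C^*(x_1,\ldots,x_k)$ is the $C^*$-subalgebra of $\mathcal{A}$ generated by $x_1,\ldots,x_k$; $C^*_1(x_1,\ldots,x_k)$ is the smallest $C^*$-subalgebra containing $x_1,\ldots,x_k$ and the unit of $\mathcal{A}$. A $C^*$-algebra is $n$-homogeneous if every nonzero irreducible representation acts on an $n$-dimensional Hilbert space. *)

theory Defs
  imports "HOL-Analysis.Analysis"
begin

text \<open>A unital C*-algebra: a unital Banach algebra (norm 1 = 1) carrying a complex
  scalar multiplication sc extending the real one, and an involution st satisfying the C*-identity.\<close>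

definition cstar_algebra :: "(complex \<Rightarrow> 'a::{real_normed_algebra_1,banach} \<Rightarrow> 'a) \<Rightarrow> ('a \<Rightarrow> 'a) \<Rightarrow> bool"
  where "cstar_algebra sc st \<longleftrightarrow>
    (\<forall>r x. sc (complex_of_real r) x = scaleR r x) \<and>
    (\<forall>a b x. sc a (sc b x) = sc (a * b) x) \<and>
    (\<forall>a x y. sc a (x + y) = sc a x + sc a y) \<and>
    (\<forall>a b x. sc (a + b) x = sc a x + sc b x) \<and>
    (\<forall>a x y. sc a (x * y) = sc a x * y) \<and>
    (\<forall>a x y. sc a (x * y) = x * sc a y) \<and>
    (\<forall>a x. norm (sc a x) = cmod a * norm x) \<and>
    (\<forall>x. st (st x) = x) \<and>
    (\<forall>x y. st (x + y) = st x + st y) \<and>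
    (\<forall>a x. st (sc a x) = sc (cnj a) (st x)) \<and>
    (\<forall>x y. st (x * y) = st y * st x) \<and>
    (\<forall>x. norm (st x * x) = (norm x)\<^sup>2)"

definition cstar_subalgebra :: "(complex \<Rightarrow> 'a \<Rightarrow> 'a) \<Rightarrow> ('a \<Rightarrow> 'a) \<Rightarrow> 'a::{real_normed_algebra_1,banach} set \<Rightarrow> bool"
  where "cstar_subalgebra sc st B \<longleftrightarrow> closed B \<and> 0 \<in> B \<and>
    (\<forall>x\<in>B. \<forall>y\<in>B. x + y \<in> B \<and> x * y \<in> B) \<and>
    (\<forall>a. \<forall>x\<in>B. sc a x \<in> B) \<and> (\<forall>x\<in>B. st x \<in> B)"

definition generated_cstar :: "(complex \<Rightarrow> 'a \<Rightarrow> 'a) \<Rightarrow> ('a \<Rightarrow> 'a) \<Rightarrow> 'a::{real_normed_algebra_1,banach} set \<Rightarrow> 'a set"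
  where "generated_cstar sc st X = \<Inter>{B. cstar_subalgebra sc st B \<and> X \<subseteq> B}"

definition generated_cstar1 :: "(complex \<Rightarrow> 'a \<Rightarrow> 'a) \<Rightarrow> ('a \<Rightarrow> 'a) \<Rightarrow> 'a::{real_normed_algebra_1,banach} set \<Rightarrow> 'a set"
  where "generated_cstar1 sc st X = generated_cstar sc st (insert 1 X)"

definition l2_vec :: "('i \<Rightarrow> complex) \<Rightarrow> bool"
  where "l2_vec f \<longleftrightarrow> (\<lambda>i. (cmod (f i))\<^sup>2) summable_on UNIV"

definition l2_norm :: "('i \<Rightarrow> complex) \<Rightarrow> real"
  where "l2_norm f = sqrt (infsum (\<lambda>i. (cmod (f i))\<^sup>2) UNIV)"

definition l2_inner :: "('i \<Rightarrow> complex) \<Rightarrow> ('i \<Rightarrow> complex) \<Rightarrow> complex"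
  where "l2_inner f g = infsum (\<lambda>i. cnj (f i) * g i) UNIV"

definition closed_l2_subspace :: "('i \<Rightarrow> complex) set \<Rightarrow> bool"
  where "closed_l2_subspace H \<longleftrightarrow> H \<subseteq> {f. l2_vec f} \<and> (\<lambda>_. 0) \<in> H \<and>
    (\<forall>f\<in>H. \<forall>g\<in>H. (\<lambda>i. f i + g i) \<in> H) \<and>
    (\<forall>c. \<forall>f\<in>H. (\<lambda>i. c * f i) \<in> H) \<and>
    (\<forall>s g. (\<forall>m. s m \<in> H) \<and> l2_vec g \<and> ((\<lambda>m. l2_norm (\<lambda>i. s m i - g i)) \<longlonglongrightarrow> 0) \<longrightarrow> g \<in> H)"

definition representation ::
  "(complex \<Rightarrow> 'a \<Rightarrow> 'a) \<Rightarrow> ('a \<Rightarrow> 'a) \<Rightarrow> 'a::{real_normed_algebra_1,banach} set \<Rightarrow>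
   ('i \<Rightarrow> complex) set \<Rightarrow> ('a \<Rightarrow> ('i \<Rightarrow> complex) \<Rightarrow> ('i \<Rightarrow> complex)) \<Rightarrow> bool"
  where "representation sc st B H \<pi> \<longleftrightarrow> closed_l2_subspace H \<and>
    (\<forall>b\<in>B. \<forall>h\<in>H. \<pi> b h \<in> H) \<and>
    (\<forall>b\<in>B. \<forall>f\<in>H. \<forall>g\<in>H. \<forall>c d. \<pi> b (\<lambda>i. c * f i + d * g i) = (\<lambda>i. c * \<pi> b f i + d * \<pi> b g i)) \<and>
    (\<forall>b\<in>B. \<exists>C. \<forall>h\<in>H. l2_norm (\<pi> b h) \<le> C * l2_norm h) \<and>
    (\<forall>a\<in>B. \<forall>b\<in>B. \<forall>h\<in>H. \<pi> (a + b) h = (\<lambda>i. \<pi> a h i + \<pi> b h i) \<and> \<pi> (a * b) h = \<pi> a (\<pi> b h)) \<and>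
    (\<forall>c. \<forall>b\<in>B. \<forall>h\<in>H. \<pi> (sc c b) h = (\<lambda>i. c * \<pi> b h i)) \<and>
    (\<forall>b\<in>B. \<forall>f\<in>H. \<forall>g\<in>H. l2_inner (\<pi> (st b) f) g = l2_inner f (\<pi> b g))"

definition irreducible_rep ::
  "(complex \<Rightarrow> 'a \<Rightarrow> 'a) \<Rightarrow> ('a \<Rightarrow> 'a) \<Rightarrow> 'a::{real_normed_algebra_1,banach} set \<Rightarrow>
   ('i \<Rightarrow> complex) set \<Rightarrow> ('a \<Rightarrow> ('i \<Rightarrow> complex) \<Rightarrow> ('i \<Rightarrow> complex)) \<Rightarrow> bool"
  where "irreducible_rep sc st B H \<pi> \<longleftrightarrow> representation sc st B H \<pi> \<and>
    (\<exists>b\<in>B. \<exists>h\<in>H. \<pi> b h \<noteq> (\<lambda>_. 0)) \<and>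
    (\<forall>K. closed_l2_subspace K \<and> K \<subseteq> H \<and> (\<forall>b\<in>B. \<forall>h\<in>K. \<pi> b h \<in> K) \<longrightarrow> K = {\<lambda>_. 0} \<or> K = H)"

definition has_dim :: "('i \<Rightarrow> complex) set \<Rightarrow> nat \<Rightarrow> bool"
  where "has_dim H n \<longleftrightarrow> (\<exists>e. (\<forall>j<n. e j \<in> H) \<and>
    H = {(\<lambda>i. \<Sum>j<n. c j * e j i) | c. True} \<and>
    (\<forall>c. (\<lambda>i. \<Sum>j<n. c j * e j i) = (\<lambda>_. 0) \<longrightarrow> (\<forall>j<n. c j = 0)))"

text \<open>Every irreducible representation of B is unitarily
  equivalent to one on a closed subspace of l2(A) (its Hilbert dimension is at most card A), so
  quantifying over representations on closed subspaces of l2(A) covers all of them.\<close>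
definition n_homogeneous ::
  "(complex \<Rightarrow> 'a \<Rightarrow> 'a) \<Rightarrow> ('a \<Rightarrow> 'a) \<Rightarrow> 'a::{real_normed_algebra_1,banach} set \<Rightarrow> nat \<Rightarrow> bool"
  where "n_homogeneous sc st B n \<longleftrightarrow>
    (\<forall>(H :: ('a \<Rightarrow> complex) set) \<pi>. irreducible_rep sc st B H \<pi> \<longrightarrow> has_dim H n)"

end

theory Submission
  imports Defs
begin

text \<open>If the unit does not lie in S = C*(x1, ..., xk), then S is a closed ideal of
  codimension one in C*_1(x1, ..., xk) = S + C 1, and reading off the coefficient of 1
  is a character, i.e. a nonzero *-homomorphism into C. Multiplication by a character is an
  irreducible representation on a one-dimensional Hilbert space, which n-homogeneity with n > 1
  rules out. Hence 1 is in S, and the two generated C*-algebras coincide.\<close>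

definition point_supported :: "'i \<Rightarrow> ('i \<Rightarrow> complex) set"
  where "point_supported i0 = {f. \<forall>i. i \<noteq> i0 \<longrightarrow> f i = 0}"

lemma infsum_point_supported:
  assumes "f \<in> point_supported i0"
  shows "infsum (\<lambda>i. (cmod (f i))\<^sup>2) UNIV = (cmod (f i0))\<^sup>2"
proof -
  have "infsum (\<lambda>i. (cmod (f i))\<^sup>2) UNIV = infsum (\<lambda>i. (cmod (f i))\<^sup>2) {i0}"
    using assms by (intro infsum_cong_neutral) (auto simp: point_supported_def)
  then show ?thesis by simp
qed

lemma l2_vec_point_supported:
  assumes "f \<in> point_supported i0"
  shows "l2_vec f"
proof -
  have "(\<lambda>i. (cmod (f i))\<^sup>2) summable_on {i0}" by simp
  then show ?thesis
    unfolding l2_vec_def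
    using assms by (subst summable_on_cong_neutral[of "{i0}"]) (auto simp: point_supported_def)
qed

lemma l2_norm_point_supported: "f \<in> point_supported i0 \<Longrightarrow> l2_norm f = cmod (f i0)"
  unfolding l2_norm_def by (simp add: infsum_point_supported)

lemma l2_inner_point_supported:
  assumes "f \<in> point_supported i0" "g \<in> point_supported i0"
  shows "l2_inner f g = cnj (f i0) * g i0"
proof -
  have "infsum (\<lambda>i. cnj (f i) * g i) UNIV = infsum (\<lambda>i. cnj (f i) * g i) {i0}"
    using assms by (intro infsum_cong_neutral) (auto simp: point_supported_def)
  then show ?thesis unfolding l2_inner_def by simp
qed

lemma abs_le_l2_norm:
  assumes "l2_vec f"
  shows "cmod (f j) \<le> l2_norm f"
proof -
  have "infsum (\<lambda>i. (cmod (f i))\<^sup>2) {j} \<le> infsum (\<lambda>i. (cmod (f i))\<^sup>2) UNIV"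
    using assms unfolding l2_vec_def by (intro infsum_mono_neutral) auto
  then have "sqrt ((cmod (f j))\<^sup>2) \<le> l2_norm f"
    unfolding l2_norm_def by (intro real_sqrt_le_mono) simp
  then show ?thesis by simp
qed

lemma closed_l2_subspace_point_supported: "closed_l2_subspace (point_supported i0)"
  unfolding closed_l2_subspace_def
proof (intro conjI allI ballI impI subsetI)
  fix s g
  assume lim: "(\<forall>m. s m \<in> point_supported i0) \<and> l2_vec g \<and> (\<lambda>m. l2_norm (\<lambda>i. s m i - g i)) \<longlonglongrightarrow> 0"
  show "g \<in> point_supported i0" unfolding point_supported_def
  proof (intro CollectI allI impI)
    fix j assume "j \<noteq> i0"
    then have s_j: "s m j = 0" for m
      using lim by (auto simp: point_supported_def)
    have "l2_vec (\<lambda>i. s m i - g i)" for m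
    proof -
      have "(\<lambda>i. (cmod (s m i - g i))\<^sup>2) summable_on UNIV - {i0} \<longleftrightarrow>
            (\<lambda>i. (cmod (g i))\<^sup>2) summable_on UNIV - {i0}"
        using lim by (intro summable_on_cong_neutral) (auto simp: point_supported_def)
      moreover have "(\<lambda>i. (cmod (g i))\<^sup>2) summable_on UNIV - {i0}"
        using lim unfolding l2_vec_def by (auto intro: summable_on_subset)
      ultimately show ?thesis
        unfolding l2_vec_def by (metis summable_on_insert_iff insert_Diff_single insert_UNIV)
    qed
    then have "cmod (g j) \<le> l2_norm (\<lambda>i. s m i - g i)" for m
      using abs_le_l2_norm[of "\<lambda>i. s m i - g i" j] by (simp add: s_j)
    then have "cmod (g j) \<le> 0"
      using lim by (intro LIMSEQ_le_const[of "\<lambda>m. l2_norm (\<lambda>i. s m i - g i)"]) auto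
    then show "g j = 0" by simp
  qed
qed (auto simp: point_supported_def l2_vec_point_supported)

lemma closed_l2_subspace_of_point_supported:
  assumes "closed_l2_subspace K" "K \<subseteq> point_supported i0"
  shows "K = {\<lambda>_. 0} \<or> K = point_supported i0"
proof (cases "K \<subseteq> {\<lambda>_. 0}")
  case True
  moreover have "(\<lambda>_. 0) \<in> K" using assms(1) unfolding closed_l2_subspace_def by blast
  ultimately show ?thesis by blast
next
  case False
  then obtain f where f: "f \<in> K" "f \<noteq> (\<lambda>_. 0)" by blast
  then have f_supp: "f \<in> point_supported i0" using assms(2) by blast
  with f have "f i0 \<noteq> 0" by (auto simp: point_supported_def)
  have "h \<in> K" if "h \<in> point_supported i0" for h
  proof -
    have "h i = (h i0 / f i0) * f i" for i
      using that f_supp \<open>f i0 \<noteq> 0\<close> by (cases "i = i0") (auto simp: point_supported_def)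
    then have "h = (\<lambda>i. (h i0 / f i0) * f i)" by blast
    also have "\<dots> \<in> K" using assms(1) f(1) unfolding closed_l2_subspace_def by blast
    finally show ?thesis .
  qed
  then show ?thesis using assms(2) by blast
qed

lemma has_dim_point_supported_le_1:
  assumes "has_dim (point_supported i0) n"
  shows "n \<le> 1"
proof (rule ccontr)
  assume "\<not> n \<le> 1"
  obtain e where e: "\<forall>j<n. e j \<in> point_supported i0"
    and indep: "\<And>c. (\<lambda>i. \<Sum>j<n. c j * e j i) = (\<lambda>_. 0) \<Longrightarrow> \<forall>j<n. c j = 0"
    using assms unfolding has_dim_def by blast
  have e_off: "e 0 i = 0" "e 1 i = 0" if "i \<noteq> i0" for i
    using e \<open>\<not> n \<le> 1\<close> that unfolding point_supported_def by auto
  have two_terms: "(\<Sum>j<n. c j * e j i) = c 0 * e 0 i + c 1 * e 1 i"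
    if "\<And>j. j > 1 \<Longrightarrow> c j = 0" for c i
  proof -
    have "(\<Sum>j<n. c j * e j i) = (\<Sum>j\<in>{0,1}. c j * e j i)"
      using that \<open>\<not> n \<le> 1\<close> by (intro sum.mono_neutral_right) auto
    then show ?thesis by simp
  qed
  have "e 0 i0 \<noteq> 0"
  proof
    assume "e 0 i0 = 0"
    then have "(\<lambda>i. \<Sum>j<n. (if j = 0 then 1 else 0) * e j i) = (\<lambda>_. 0)"
      using two_terms[of "\<lambda>j. if j = 0 then 1 else 0"] e_off by (auto intro!: ext) (metis)
    then show False using indep \<open>\<not> n \<le> 1\<close> by fastforce
  qed
  \<comment> \<open>Two vectors on a line are dependent: e 1 i0 * e 0 - e 0 i0 * e 1 = 0.\<close>
  define c :: "nat \<Rightarrow> complex" where "c j = (if j = 0 then e 1 i0 else if j = 1 then - e 0 i0 else 0)" for j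
  have "(\<lambda>i. \<Sum>j<n. c j * e j i) = (\<lambda>_. 0)"
  proof
    fix i
    show "(\<Sum>j<n. c j * e j i) = 0"
      using two_terms[of c i] e_off[of i] by (cases "i = i0") (auto simp: c_def)
  qed
  then have "c 1 = 0" using indep \<open>\<not> n \<le> 1\<close> by auto
  with \<open>e 0 i0 \<noteq> 0\<close> show False by (simp add: c_def)
qed

definition cstar_character ::
  "(complex \<Rightarrow> 'a \<Rightarrow> 'a) \<Rightarrow> ('a \<Rightarrow> 'a) \<Rightarrow> 'a::{real_normed_algebra_1,banach} set \<Rightarrow> ('a \<Rightarrow> complex) \<Rightarrow> bool"
  where "cstar_character sc st B \<phi> \<longleftrightarrow>
    (\<forall>a\<in>B. \<forall>b\<in>B. \<phi> (a + b) = \<phi> a + \<phi> b \<and> \<phi> (a * b) = \<phi> a * \<phi> b) \<and>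
    (\<forall>c. \<forall>a\<in>B. \<phi> (sc c a) = c * \<phi> a) \<and>
    (\<forall>a\<in>B. \<phi> (st a) = cnj (\<phi> a)) \<and>
    (\<exists>a\<in>B. \<phi> a \<noteq> 0)"

lemma cstar_character_subset:
  assumes "cstar_character sc st B \<phi>" "B' \<subseteq> B" "b \<in> B'" "\<phi> b \<noteq> 0"
  shows "cstar_character sc st B' \<phi>"
  using assms unfolding cstar_character_def by blast

lemma irreducible_rep_character:
  assumes "cstar_character sc st B \<phi>"
  shows "irreducible_rep sc st B (point_supported i0) (\<lambda>b h i. \<phi> b * h i)"
proof -
  let ?H = "point_supported i0" and ?\<pi> = "\<lambda>b h i. \<phi> b * h i"
  have scaled: "(\<lambda>i. c * h i) \<in> ?H" if "h \<in> ?H" for c h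
    using that by (simp add: point_supported_def)
  have "representation sc st B ?H ?\<pi>"
    unfolding representation_def
  proof (intro conjI ballI allI closed_l2_subspace_point_supported scaled)
    show "\<exists>C. \<forall>h\<in>?H. l2_norm (?\<pi> b h) \<le> C * l2_norm h" for b
      using l2_norm_point_supported[OF scaled] l2_norm_point_supported[of _ i0]
      by (auto intro!: exI[of _ "cmod (\<phi> b)"] simp: norm_mult)
    show "l2_inner (?\<pi> (st b) f) g = l2_inner f (?\<pi> b g)" if "b \<in> B" "f \<in> ?H" "g \<in> ?H" for b f g
      using that assms l2_inner_point_supported[OF scaled \<open>g \<in> ?H\<close>]
      by (simp add: scaled l2_inner_point_supported cstar_character_def)
  qed (use assms in \<open>auto simp: cstar_character_def algebra_simps\<close>)
  moreover obtain b where "b \<in> B" "\<phi> b \<noteq> 0"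
    using assms unfolding cstar_character_def by blast
  then have "?\<pi> b (\<lambda>i. if i = i0 then 1 else 0) \<noteq> (\<lambda>_. 0)"
    by (auto dest: fun_cong[of _ _ i0])
  moreover have "(\<lambda>i. if i = i0 then 1 else 0) \<in> ?H"
    by (simp add: point_supported_def)
  ultimately show ?thesis
    unfolding irreducible_rep_def using \<open>b \<in> B\<close> closed_l2_subspace_of_point_supported by metis
qed

lemma not_n_homogeneous_if_character:
  assumes "cstar_character sc st B \<phi>" "n > 1"
  shows "\<not> n_homogeneous sc st B n"
  using irreducible_rep_character[OF assms(1), of 0] has_dim_point_supported_le_1 assms(2)
  unfolding n_homogeneous_def by (meson not_le)

lemma cstar_subalgebra_generated_cstar: "cstar_subalgebra sc st (generated_cstar sc st X)"
  unfolding generated_cstar_def cstar_subalgebra_def by (auto intro!: closed_Inter)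

lemma generated_cstar_superset: "X \<subseteq> generated_cstar sc st X"
  unfolding generated_cstar_def by auto

lemma generated_cstar_least: "cstar_subalgebra sc st B \<Longrightarrow> X \<subseteq> B \<Longrightarrow> generated_cstar sc st X \<subseteq> B"
  unfolding generated_cstar_def by auto

lemma generated_cstar_insert_member:
  assumes "a \<in> generated_cstar sc st X"
  shows "generated_cstar sc st (insert a X) = generated_cstar sc st X"
proof
  show "generated_cstar sc st (insert a X) \<subseteq> generated_cstar sc st X"
    using assms generated_cstar_superset[of X sc st]
    by (intro generated_cstar_least cstar_subalgebra_generated_cstar) auto
  show "generated_cstar sc st X \<subseteq> generated_cstar sc st (insert a X)"
    using generated_cstar_superset[of "insert a X" sc st]
    by (intro generated_cstar_least cstar_subalgebra_generated_cstar) auto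
qed

definition unitization :: "(complex \<Rightarrow> 'a \<Rightarrow> 'a) \<Rightarrow> 'a::real_normed_algebra_1 set \<Rightarrow> 'a set"
  where "unitization sc S = {y + sc c 1 | y c. y \<in> S}"

text \<open>The coefficient is well defined (THE has a unique witness) only on unitization sc S and
  only when 1 \<notin> S.\<close>
definition unit_coeff :: "(complex \<Rightarrow> 'a \<Rightarrow> 'a) \<Rightarrow> 'a::real_normed_algebra_1 set \<Rightarrow> 'a \<Rightarrow> complex"
  where "unit_coeff sc S z = (THE c. \<exists>y\<in>S. z = y + sc c 1)"

context
  fixes sc :: "complex \<Rightarrow> 'a::{real_normed_algebra_1,banach} \<Rightarrow> 'a" and st :: "'a \<Rightarrow> 'a"
  assumes cstar: "cstar_algebra sc st"
begin

lemma sc_of_real: "sc (complex_of_real r) x = r *\<^sub>R x"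
  and sc_sc: "sc a (sc b x) = sc (a * b) x"
  and sc_add_right: "sc a (x + y) = sc a x + sc a y"
  and sc_add_left: "sc (a + b) x = sc a x + sc b x"
  and sc_mult_left: "sc a (x * y) = sc a x * y"
  and sc_mult_right: "sc a (x * y) = x * sc a y"
  and norm_sc: "norm (sc a x) = cmod a * norm x"
  and st_st: "st (st x) = x"
  and st_add: "st (x + y) = st x + st y"
  and st_sc: "st (sc a x) = sc (cnj a) (st x)"
  and st_mult: "st (x * y) = st y * st x"
  using cstar unfolding cstar_algebra_def by auto

lemma sc_0: "sc 0 x = 0" and sc_1: "sc 1 x = x" and sc_minus_1: "sc (-1) x = - x"
  using sc_of_real[of 0 x] sc_of_real[of 1 x] sc_of_real[of "-1" x] by simp_all

lemma sc_diff_left: "sc (a - b) x = sc a x - sc b x"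
  using sc_add_left[of "a - b" b x] by (simp add: algebra_simps)

lemma st_1: "st 1 = 1"
  by (metis st_st st_mult mult_1_left)

lemma sc_Re_Im: "sc c x = Re c *\<^sub>R x + Im c *\<^sub>R sc \<i> x"
proof -
  have "c = complex_of_real (Re c) + complex_of_real (Im c) * \<i>" by (simp add: complex_eq_iff)
  then show ?thesis by (metis sc_add_left sc_sc sc_of_real)
qed

lemma tendsto_sc:
  assumes "c \<longlonglongrightarrow> L"
  shows "(\<lambda>n. sc (c n) x) \<longlonglongrightarrow> sc L x"
proof -
  have "(\<lambda>n. Re (c n) *\<^sub>R x + Im (c n) *\<^sub>R sc \<i> x) \<longlonglongrightarrow> Re L *\<^sub>R x + Im L *\<^sub>R sc \<i> x"
    using assms by (intro tendsto_intros)
  then show ?thesis by (simp only: sc_Re_Im[symmetric])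
qed

lemma cstar_subalgebra_diff: "cstar_subalgebra sc st B \<Longrightarrow> x \<in> B \<Longrightarrow> y \<in> B \<Longrightarrow> x - y \<in> B"
  unfolding cstar_subalgebra_def by (metis sc_minus_1 diff_conv_add_uminus)

context
  fixes S assumes S: "cstar_subalgebra sc st S" and one_notin: "1 \<notin> S"
begin

lemma unit_coeff_unique:
  assumes "y \<in> S" "y' \<in> S" "y + sc c 1 = y' + sc c' 1"
  shows "c = c'"
proof (rule ccontr)
  assume "c \<noteq> c'"
  have "sc (c - c') 1 = y' - y" using assms(3) by (simp add: sc_diff_left algebra_simps)
  then have "sc (inverse (c - c')) (sc (c - c') 1) \<in> S"
    using S cstar_subalgebra_diff[OF S assms(2,1)] unfolding cstar_subalgebra_def by simp
  with \<open>c \<noteq> c'\<close> one_notin show False by (simp add: sc_sc sc_1)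
qed

lemma unit_coeff_eq: "y \<in> S \<Longrightarrow> unit_coeff sc S (y + sc c 1) = c"
  unfolding unit_coeff_def by (rule the_equality) (auto dest: unit_coeff_unique)

lemma unitizationI: "y \<in> S \<Longrightarrow> y + sc c 1 \<in> unitization sc S"
  unfolding unitization_def by auto

lemma unitizationE:
  assumes "z \<in> unitization sc S"
  obtains y where "y \<in> S" "z = y + sc (unit_coeff sc S z) 1"
  using assms unit_coeff_eq unfolding unitization_def by auto

lemma norm_unitization_lower_bound:
  assumes "y \<in> S"
  shows "cmod c * infdist 1 S \<le> norm (y + sc c 1)"
proof (cases "c = 0")
  case False
  have "- sc (inverse c) y \<in> S"
    using S assms sc_minus_1 sc_sc unfolding cstar_subalgebra_def by metis
  then have "infdist 1 S \<le> dist 1 (- sc (inverse c) y)" by (rule infdist_le)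
  moreover have "y + sc c 1 = sc c (sc (inverse c) y + 1)"
    using False by (simp add: sc_add_right sc_sc sc_1)
  then have "norm (y + sc c 1) = cmod c * dist 1 (- sc (inverse c) y)"
    by (simp add: norm_sc dist_norm add.commute)
  ultimately show ?thesis by (simp add: mult_left_mono)
qed simp

lemma closed_unitization: "closed (unitization sc S)"
  unfolding closed_sequential_limits
proof (intro allI impI, elim conjE)
  fix f l assume f: "\<forall>n. f n \<in> unitization sc S" and "f \<longlonglongrightarrow> l"
  define c where "c n = unit_coeff sc S (f n)" for n
  define y where "y n = f n - sc (c n) 1" for n
  have y: "y n \<in> S" for n
    using f unitizationE unfolding y_def c_def by (metis add_diff_cancel_right')
  have d: "infdist 1 S > 0"
    using S one_notin by (intro infdist_pos_not_in_closed) (auto simp: cstar_subalgebra_def)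
  \<comment> \<open>The coefficient map is Lipschitz with constant 1 / infdist 1 S, so c is Cauchy.\<close>
  have "Cauchy c"
    unfolding Cauchy_def
  proof (intro allI impI)
    fix e :: real assume "e > 0"
    from \<open>f \<longlonglongrightarrow> l\<close> have "Cauchy f" by (rule LIMSEQ_imp_Cauchy)
    then obtain M where M: "\<forall>m\<ge>M. \<forall>n\<ge>M. dist (f m) (f n) < e * infdist 1 S"
      using d \<open>e > 0\<close> unfolding Cauchy_def by (meson mult_pos_pos)
    have "dist (c m) (c n) < e" if "m \<ge> M" "n \<ge> M" for m n
    proof -
      have "f m - f n = (y m - y n) + sc (c m - c n) 1"
        unfolding y_def by (simp add: sc_diff_left algebra_simps)
      then have "cmod (c m - c n) * infdist 1 S \<le> dist (f m) (f n)"
        using norm_unitization_lower_bound[OF cstar_subalgebra_diff[OF S y y]] by (simp add: dist_norm)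
      also have "\<dots> < e * infdist 1 S" using M that by blast
      finally show ?thesis using d by (simp add: dist_norm)
    qed
    then show "\<exists>M. \<forall>m\<ge>M. \<forall>n\<ge>M. dist (c m) (c n) < e" by blast
  qed
  then obtain L where "c \<longlonglongrightarrow> L" using Cauchy_convergent_iff convergent_def by blast
  then have "y \<longlonglongrightarrow> l - sc L 1"
    unfolding y_def by (intro tendsto_intros tendsto_sc \<open>f \<longlonglongrightarrow> l\<close>)
  with y S have "l - sc L 1 \<in> S"
    unfolding cstar_subalgebra_def by (metis closed_sequentially)
  from unitizationI[OF this, of L] show "l \<in> unitization sc S" by simp
qed

lemma unitization_mult:
  "(y + sc c 1) * (y' + sc c' 1) = (y * y' + sc c' y + sc c y') + sc (c * c') 1"
proof -
  have "y * sc c' 1 = sc c' y" "sc c 1 * y' = sc c y'" "sc c 1 * sc c' 1 = sc (c * c') 1"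
    by (metis sc_mult_right sc_mult_left sc_sc mult_1_right mult_1_left)+
  then show ?thesis by (simp add: algebra_simps)
qed

lemma unit_coeff_ops:
  assumes a: "a \<in> unitization sc S" and b: "b \<in> unitization sc S"
  shows "a + b \<in> unitization sc S \<and> unit_coeff sc S (a + b) = unit_coeff sc S a + unit_coeff sc S b"
    and "a * b \<in> unitization sc S \<and> unit_coeff sc S (a * b) = unit_coeff sc S a * unit_coeff sc S b"
    and "sc c a \<in> unitization sc S \<and> unit_coeff sc S (sc c a) = c * unit_coeff sc S a"
    and "st a \<in> unitization sc S \<and> unit_coeff sc S (st a) = cnj (unit_coeff sc S a)"
proof -
  define ca cb where "ca = unit_coeff sc S a" and "cb = unit_coeff sc S b"
  obtain y where y: "y \<in> S" and a_eq: "a = y + sc ca 1"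
    using a unfolding ca_def by (rule unitizationE)
  obtain y' where y': "y' \<in> S" and b_eq: "b = y' + sc cb 1"
    using b unfolding cb_def by (rule unitizationE)
  have "y + y' \<in> S" "y * y' + sc cb y + sc ca y' \<in> S" "sc c y \<in> S" "st y \<in> S"
    using S y y' unfolding cstar_subalgebra_def by simp_all
  moreover have "a + b = (y + y') + sc (ca + cb) 1"
    "a * b = (y * y' + sc cb y + sc ca y') + sc (ca * cb) 1"
    "sc c a = sc c y + sc (c * ca) 1"
    "st a = st y + sc (cnj ca) 1"
    unfolding a_eq b_eq
    by (simp_all add: sc_add_left sc_add_right sc_sc unitization_mult st_add st_sc st_1)
  ultimately show
    "a + b \<in> unitization sc S \<and> unit_coeff sc S (a + b) = unit_coeff sc S a + unit_coeff sc S b"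
    "a * b \<in> unitization sc S \<and> unit_coeff sc S (a * b) = unit_coeff sc S a * unit_coeff sc S b"
    "sc c a \<in> unitization sc S \<and> unit_coeff sc S (sc c a) = c * unit_coeff sc S a"
    "st a \<in> unitization sc S \<and> unit_coeff sc S (st a) = cnj (unit_coeff sc S a)"
    by (simp_all add: unitizationI unit_coeff_eq flip: ca_def cb_def)
qed

lemma subset_unitization: "S \<subseteq> unitization sc S"
  using unitizationI[of _ 0] by (auto simp: sc_0)

lemma one_in_unitization: "1 \<in> unitization sc S"
  and unit_coeff_1: "unit_coeff sc S 1 = 1"
  using unitizationI[of 0 1] unit_coeff_eq[of 0 1] S by (simp_all add: sc_1 cstar_subalgebra_def)

lemma cstar_subalgebra_unitization: "cstar_subalgebra sc st (unitization sc S)"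
  unfolding cstar_subalgebra_def
proof (intro conjI ballI allI closed_unitization)
  show "0 \<in> unitization sc S"
    using unitizationI[of 0 0] S by (simp add: sc_0 cstar_subalgebra_def)
qed (use unit_coeff_ops in blast)+

lemma cstar_character_unit_coeff: "cstar_character sc st (unitization sc S) (unit_coeff sc S)"
  unfolding cstar_character_def
proof (intro conjI ballI allI)
  show "\<exists>a\<in>unitization sc S. unit_coeff sc S a \<noteq> 0"
    using one_in_unitization unit_coeff_1 by (metis one_neq_zero)
qed (use unit_coeff_ops in blast)+

end

end

theorem lemma6p1:
  fixes sc :: "complex \<Rightarrow> 'a::{real_normed_algebra_1,banach} \<Rightarrow> 'a"
    and st :: "'a \<Rightarrow> 'a"
    and x :: "nat \<Rightarrow> 'a"
    and k n :: nat
  assumes "cstar_algebra sc st"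
    and "n > 1"
    and "n_homogeneous sc st (generated_cstar1 sc st (x ` {1..k})) n"
  shows "generated_cstar1 sc st (x ` {1..k}) = generated_cstar sc st (x ` {1..k})"
proof -
  let ?X = "x ` {1..k}"
  let ?S = "generated_cstar sc st ?X"
  have "1 \<in> ?S"
  proof (rule ccontr)
    assume "1 \<notin> ?S"
    note hyps = assms(1) cstar_subalgebra_generated_cstar this
    have C1_sub: "generated_cstar1 sc st ?X \<subseteq> unitization sc ?S"
      unfolding generated_cstar1_def
    proof (rule generated_cstar_least[OF cstar_subalgebra_unitization[OF hyps]])
      show "insert 1 ?X \<subseteq> unitization sc ?S"
        using one_in_unitization[OF hyps] subset_unitization[OF hyps]
          generated_cstar_superset[of ?X sc st] by blast
    qed
    have "1 \<in> generated_cstar1 sc st ?X"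
      unfolding generated_cstar1_def by (rule subsetD[OF generated_cstar_superset]) simp
    with C1_sub have "cstar_character sc st (generated_cstar1 sc st ?X) (unit_coeff sc ?S)"
      by (rule cstar_character_subset[OF cstar_character_unit_coeff[OF hyps]])
        (use unit_coeff_1[OF hyps] in simp)
    then show False
      using not_n_homogeneous_if_character[OF _ assms(2)] assms(3) by blast
  qed
  then show ?thesis
    unfolding generated_cstar1_def by (rule generated_cstar_insert_member)
qed

end
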